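(* Let $P$ be a finite set and let $w=\alpha_1\cdots\alpha_n\in P^*$ be a reduced word of length $n\ge1$ with $a=\alpha_1$, $c=\alpha_n$, and let $\ell=|\mathrm{alph}(w)|$. If $\ell\le2$, then $w$ has either the form $(ac)^k$ or $(ab)^ka$ (for some $b\in P$), where $k=\lfloor n/2\rfloor$. If $\ell\ge3$, then there exists a reduced word $w'\in aP^*c$ with $|w'|_\alpha=|w|_\alpha$ for all $\alpha\in P$ such that one of the following holds (all $\beta_i,\gamma_i\in P$, $n_i\in\mathbb N$): (1) $|w|_a=\lceil n/2\rceil$ and, for $k=\ell-1$ and some $d\in\{1,a\}$, $w'=(a\beta_1)^{n_1}\cdots(a\beta_k)^{n_k}d$; (2) $|w|_a=n/2$ and, for $k=\ell-1$, $w'=(a\beta_1)^{n_1}(\beta_2a)^{n_2}\cdots(\beta_ka)^{n_k}$; (3) $|w|_a<n/2$ and, for some $d\in\{1,c\}$ and some $k\le\binom{\ell}{2}$, $w'=(a\gamma_1)^{n_1}(\beta_2\gamma_2)^{n_2}\cdots(\beta_k\gamma_k)^{n_k}d$.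
   Context: A word $\alpha_1\cdots\alpha_n\in P^*$ is reduced if $\alpha_i\ne\alpha_{i+1}$ for all $1\le i<n$. For $w\in P^*$ and $\alpha\in P$, $|w|_\alpha$ is the number of occurrences of $\alpha$ in $w$, and $\mathrm{alph}(w)$ is the set of letters occurring in $w$; $1$ denotes the empty word. (In the paper the requirement on $w'$ is phrased as equality $\pi(w)=\pi(w')$ of extended Parikh images in a free product of abelian groups in which each $\alpha\in P$ is a fixed generator of the $\alpha$-th factor; for reduced words in $aP^*c$ this amounts to equal letter counts.) *)

theory Defs
  imports Main
begin

definition reduced :: "'a list \<Rightarrow> bool" where
  "reduced w \<longleftrightarrow> (\<forall>i. Suc i < length w \<longrightarrow> w ! i \<noteq> w ! Suc i)"

definition pw :: "'a \<Rightarrow> 'a \<Rightarrow> nat \<Rightarrow> 'a list" where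
  "pw x y m = concat (replicate m [x, y])"

end

theory Submission
  imports Defs "HOL-Library.Multiset"
begin

(* In a reduced word of length n a letter occurs at most \<lceil>n/2\<rceil> times, and only an end letter
   can reach this bound.  If the first letter a reaches it (or occurs n/2 times while w also ends
   with a), then a occupies every other position, and listing the other letters one after another
   gives the forms (1) and (2).

   Otherwise cut off the last letter if n is odd, leaving a prefix v of length 2N, and arrange the
   letters of v as S = a^p M a^q, where M lists each remaining letter in a single run.  No letter of
   v occurs more than N times, so the word S_0 S_N S_1 S_(N+1) ... S_(N-1) S_(2N-1) is reduced.  It
   is a product of blocks (xy)^m, one for each run of the pairs (S_j, S_(N+j)), and these runs change
   only where S changes letter within a half.  This bounds the number of blocks by \<ell>, or by \<ell> + 1
   when \<ell> \<ge> 4, hence by \<ell> choose 2. *)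

lemma reduced_iff_successively: "reduced w \<longleftrightarrow> successively (\<noteq>) w"
  by (simp add: reduced_def successively_conv_nth)

lemma reduced_count_bound:
  assumes "reduced v" "v \<noteq> []"
  shows "2 * count_list v x + 1 \<le> length v + of_bool (hd v = x) + of_bool (last v = x)"
  using assms
proof (induction v)
  case (Cons y v)
  show ?case
  proof (cases "v = []")
    case False
    with Cons.prems have "reduced v" "y \<noteq> hd v"
      by (auto simp: reduced_iff_successively successively_Cons)
    with Cons.IH False show ?thesis by (auto simp: of_bool_def split: if_splits)
  qed simp
qed simp

lemma pw_0 [simp]: "pw x y 0 = []"
  by (simp add: pw_def)

lemma pw_Suc: "pw x y (Suc m) = x # y # pw x y m"
  by (simp add: pw_def)

lemma length_pw [simp]: "length (pw x y m) = 2 * m"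
  by (induction m) (auto simp: pw_Suc)

lemma pw_eq_Nil_iff [simp]: "pw x y m = [] \<longleftrightarrow> m = 0"
  by (simp flip: length_0_conv)

lemma count_list_pw: "count_list (pw x y m) z = m * (of_bool (x = z) + of_bool (y = z))"
  by (induction m) (auto simp: pw_Suc)

lemma nth_pw: "i < 2 * m \<Longrightarrow> pw x y m ! i = (if even i then x else y)"
proof (induction m arbitrary: i)
  case (Suc m)
  show ?case
  proof (cases i)
    case (Suc j)
    with Suc.IH[of "j - 1"] Suc.prems show ?thesis by (cases j) (auto simp: pw_Suc)
  qed (simp add: pw_Suc)
qed simp

lemma reduced_pw: "x \<noteq> y \<Longrightarrow> reduced (pw x y m)"
proof (induction m)
  case (Suc m)
  then show ?case by (cases m) (auto simp: pw_Suc reduced_iff_successively successively_Cons)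
qed (simp add: reduced_def)

lemma hd_pw: "0 < m \<Longrightarrow> hd (pw x y m) = x"
  by (cases m) (auto simp: pw_Suc)

lemma last_pw: "0 < m \<Longrightarrow> last (pw x y m) = y"
  by (subst last_conv_nth) (auto simp: nth_pw simp flip: length_0_conv)

section \<open>Words over two letters\<close>

lemma reduced_two_letters_nth:
  assumes "reduced w" "set w \<subseteq> {a, b}" "hd w = a" "i < length w"
  shows "w ! i = (if even i then a else b)"
  using assms(4)
proof (induction i)
  case 0
  with assms(3) show ?case by (simp add: hd_conv_nth)
next
  case (Suc i)
  have "w ! Suc i \<noteq> w ! i" "w ! Suc i \<in> {a, b}"
    using assms(1,2) Suc.prems nth_mem by (fastforce simp: reduced_def)+
  with Suc show ?case by auto
qed

lemma reduced_two_letters: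
  assumes "reduced w" "set w \<subseteq> {hd w, b}"
  shows "w = pw (hd w) b (length w div 2) @ (if even (length w) then [] else [hd w])"
  by (rule nth_equalityI)
     (auto simp: reduced_two_letters_nth[OF assms] nth_append nth_pw, presburger+)

lemma reduced_card_le_2:
  assumes "reduced w" "w \<noteq> []" "card (set w) \<le> 2"
  shows "w = pw (hd w) (last w) (length w div 2)
      \<or> (\<exists>b\<in>set w. w = pw (hd w) b (length w div 2) @ [hd w])"
proof -
  obtain b where b: "b \<in> set w" "set w \<subseteq> {hd w, b}"
  proof (cases "set w \<subseteq> {hd w}")
    case False
    then obtain b where "b \<in> set w" "b \<noteq> hd w" by blast
    with assms(2,3) have "set w = {hd w, b}"
      by (metis card_2_iff card_seteq finite.emptyI finite.insertI finite_set hd_in_set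
          insert_subset empty_subsetI)
    with \<open>b \<in> set w\<close> show thesis by (intro that[of b]) auto
  qed (use assms(2) that[of "hd w"] in auto)
  note w = reduced_two_letters[OF assms(1) b(2)]
  show ?thesis
  proof (cases "even (length w)")
    case True
    with w assms(2) have "last w = b"
      by (metis append_Nil2 last_pw length_greater_0_conv length_pw nat_0_less_mult_iff)
    with w True show ?thesis by auto
  next
    case False
    with w b(1) show ?thesis by auto
  qed
qed

section \<open>A letter in every other position\<close>

lemma obtain_indexed_family:
  assumes "d \<in> A" "set xs \<subseteq> A"
  obtains f :: "nat \<Rightarrow> 'a" where "\<forall>i. f i \<in> A" "map f [j..<j + length xs] = xs"
proof
  let ?f = "\<lambda>i. if j \<le> i \<and> i < j + length xs then xs ! (i - j) else d"
  show "\<forall>i. ?f i \<in> A"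
    using assms by (auto dest: nth_mem)
  show "map ?f [j..<j + length xs] = xs"
    by (rule nth_equalityI) auto
qed

lemma obtain_other_letters:
  assumes "w \<noteq> []"
  obtains xs where "distinct xs" "set xs = set w - {hd w}"
      "last w \<noteq> hd w \<Longrightarrow> xs \<noteq> [] \<and> last xs = last w"
proof -
  obtain ys where ys: "distinct ys" "set ys = set w - {hd w, last w}"
    using finite_distinct_list[of "set w - {hd w, last w}"] by blast
  show thesis
  proof (cases "last w = hd w")
    case True
    with ys show thesis by (intro that[of ys]) auto
  next
    case False
    have "last w \<in> set w" using assms by simp
    with ys False have "distinct (ys @ [last w])" "set (ys @ [last w]) = set w - {hd w}"
      by auto
    then show thesis by (rule that) simp
  qed
qed

lemma hd_last_split: "2 \<le> length xs \<Longrightarrow> xs = hd xs # butlast (tl xs) @ [last xs]"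
  by (cases xs) auto

lemma last_concat_map: "xs \<noteq> [] \<Longrightarrow> f (last xs) \<noteq> [] \<Longrightarrow> last (concat (map f xs)) = last (f (last xs))"
  by (induction xs) (auto simp: last_append)

lemma count_list_add_sum_list_others:
  assumes "distinct xs" "set xs = set w - {a}"
  shows "count_list w a + sum_list (map (count_list w) xs) = length w"
proof -
  have "sum_list (map (count_list w) xs) = sum (count_list w) (set w - {a})"
    using assms by (simp add: sum_list_distinct_conv_sum_set)
  then show ?thesis
    using sum.remove[of "set w" a "count_list w"] sum_count_set[of w "set w"]
    by (cases "a \<in> set w") auto
qed

lemma count_list_replicate: "count_list (replicate m x) z = (if x = z then m else 0)"
  by (induction m) auto

lemma count_list_pos_iff: "0 < count_list xs x \<longleftrightarrow> x \<in> set xs"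
  by (metis count_list_0_iff neq0_conv)

lemma card_set_eq_Suc_length:
  assumes "distinct xs" "set xs = set w - {a}" "a \<in> set w"
  shows "card (set w) = Suc (length xs)"
  using assms by (metis card_Diff_singleton distinct_card card_Suc_Diff1 finite_set)

lemma obtain_indexed_other_letters:
  assumes "w \<noteq> []" "distinct xs" "set xs = set w - {hd w}"
  obtains \<beta> where "\<forall>i. \<beta> i \<in> set w" "map \<beta> [1..<card (set w)] = xs"
  using obtain_indexed_family[of "hd w" "set w" xs 1] card_set_eq_Suc_length[OF assms(2,3)] assms
  by auto

lemma count_list_concat_pw:
  assumes "distinct xs" "a \<notin> set xs"
  shows "count_list (concat (map (\<lambda>x. pw a x (h x)) xs)) z =
    (if z = a then sum_list (map h xs) else if z \<in> set xs then h z else 0)"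
  using assms by (induction xs) (auto simp: count_list_pw)

lemma count_list_concat_pw_other_letters:
  assumes "distinct xs" "set xs = set w - {a}"
  shows "count_list (concat (map (\<lambda>x. pw a x (count_list w x)) xs)) a + count_list w a = length w"
    and "z \<noteq> a \<Longrightarrow> count_list (concat (map (\<lambda>x. pw a x (count_list w x)) xs)) z = count_list w z"
  using count_list_concat_pw[OF assms(1), of a "count_list w"]
    count_list_add_sum_list_others[OF assms] assms(2)
  by (simp_all add: count_list_0_iff)

lemma count_list_concat_pw_swap:
  "count_list (concat (map (\<lambda>x. pw x a (h x)) xs)) = count_list (concat (map (\<lambda>x. pw a x (h x)) xs))"
  by (induction xs) (auto simp: count_list_pw)

lemma even_length_concat_pw: "even (length (concat (map (\<lambda>x. pw (f x) (g x) (m x)) xs)))"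
  by (induction xs) auto

lemma nth_concat_pw_parity:
  assumes "\<forall>x\<in>set xs. Q (f x) \<and> \<not> Q (g x)" "i < length (concat (map (\<lambda>x. pw (f x) (g x) (m x)) xs))"
  shows "Q (concat (map (\<lambda>x. pw (f x) (g x) (m x)) xs) ! i) \<longleftrightarrow> even i"
  using assms
proof (induction xs arbitrary: i)
  case (Cons x xs)
  show ?case
  proof (cases "i < 2 * m x")
    case True
    with Cons.prems show ?thesis by (auto simp: nth_append nth_pw)
  next
    case False
    with Cons.IH[of "i - 2 * m x"] Cons.prems show ?thesis by (auto simp: nth_append)
  qed
qed simp

lemma reduced_if_alternating: "\<forall>i<length u. Q (u ! i) \<longleftrightarrow> even i \<Longrightarrow> reduced u"
  unfolding reduced_def by (metis Suc_lessD even_Suc)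

lemma reduced_concat_pw_ending:
  assumes "ys \<noteq> []" "a \<notin> set ys" "\<forall>y\<in>set ys. 0 < h y"
  shows "reduced (concat (map (\<lambda>y. pw y a (h y)) ys))"
      "hd (concat (map (\<lambda>y. pw y a (h y)) ys)) = hd ys"
    and "last (concat (map (\<lambda>y. pw y a (h y)) ys)) = a"
proof -
  have "\<forall>i<length (concat (map (\<lambda>y. pw y a (h y)) ys)).
      concat (map (\<lambda>y. pw y a (h y)) ys) ! i \<noteq> a \<longleftrightarrow> even i"
    using nth_concat_pw_parity[where Q="\<lambda>x. x \<noteq> a" and f=id and g="\<lambda>_. a" and m=h]
      assms(2)
    by auto
  then show "reduced (concat (map (\<lambda>y. pw y a (h y)) ys))"
    by (rule reduced_if_alternating)
  show "hd (concat (map (\<lambda>y. pw y a (h y)) ys)) = hd ys"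
    using assms(1,3) by (cases ys) (auto simp: hd_pw)
  show "last (concat (map (\<lambda>y. pw y a (h y)) ys)) = a"
    using assms(1,3) by (simp add: last_concat_map last_pw)
qed

lemma rearrangement_first_letter_majority:
  assumes "reduced w" "w \<noteq> []" "2 * count_list w (hd w) = length w + of_bool (last w = hd w)"
  obtains w' \<beta> m d where "reduced w'" "mset w' = mset w" "hd w' = hd w" "last w' = last w"
    "\<forall>i. \<beta> i \<in> set w" "d \<in> {[], [hd w]}"
    "w' = concat (map (\<lambda>i. pw (hd w) (\<beta> i) (m i)) [1..<card (set w)]) @ d"
proof -
  define a c h where "a = hd w" and "c = last w" and "h = count_list w"
  obtain xs where xs: "distinct xs" "set xs = set w - {a}" "c \<noteq> a \<Longrightarrow> xs \<noteq> [] \<and> last xs = c"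
    using obtain_other_letters[OF assms(2)] by (auto simp: a_def c_def)
  define u d where "u = concat (map (\<lambda>x. pw a x (h x)) xs)" and "d = (if c = a then [a] else [])"
  have a_alternates: "\<forall>i<length (u @ d). (u @ d) ! i = a \<longleftrightarrow> even i"
    using nth_concat_pw_parity[where Q="\<lambda>x. x = a" and f="\<lambda>_. a" and g=id and m=h and xs=xs]
      even_length_concat_pw[where f="\<lambda>_. a" and g=id and m=h and xs=xs] xs(2)
    by (auto simp: u_def d_def nth_append less_Suc_eq split: if_splits)
  have "count_list (u @ d) z = h z" for z
  proof (cases "z = a")
    case True
    have "count_list (u @ d) a + h a = length w + of_bool (c = a)"
      using count_list_concat_pw_other_letters(1)[OF xs(1,2)] by (simp add: u_def d_def h_def)
    with assms(3) True show ?thesis by (simp add: a_def c_def h_def)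
  next
    case False
    then show ?thesis
      using count_list_concat_pw_other_letters(2)[OF xs(1,2)] by (simp add: u_def d_def h_def)
  qed
  then have mset_eq: "mset (u @ d) = mset w"
    by (intro multiset_eqI) (simp add: count_mset h_def)
  then have "u @ d \<noteq> []" using assms(2) by auto
  then have "hd (u @ d) = a"
    using a_alternates by (simp add: hd_conv_nth)
  moreover have "last (u @ d) = c"
  proof (cases "c = a")
    case False
    with xs(2,3) have "0 < h c" by (metis DiffD1 count_list_pos_iff h_def last_in_set)
    with False xs(3) show ?thesis by (simp add: u_def d_def last_concat_map last_pw)
  qed (simp add: d_def)
  moreover obtain \<beta> where \<beta>: "\<forall>i. \<beta> i \<in> set w" "map \<beta> [1..<card (set w)] = xs"
    using obtain_indexed_other_letters[OF assms(2) xs(1,2)[unfolded a_def]] by blast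
  moreover have "u = concat (map (\<lambda>i. pw a (\<beta> i) (h (\<beta> i))) [1..<card (set w)])"
    unfolding u_def \<beta>(2)[symmetric] by (simp add: comp_def)
  ultimately show thesis
    using that[where w'="u @ d" and \<beta>=\<beta> and m="h \<circ> \<beta>" and d=d]
      reduced_if_alternating[OF a_alternates] mset_eq
    by (auto simp: a_def c_def d_def)
qed

lemma rearrangement_first_letter_half:
  assumes "reduced w" "2 * count_list w (hd w) = length w" "last w = hd w" "3 \<le> card (set w)"
  obtains w' \<beta> m where "reduced w'" "mset w' = mset w" "hd w' = hd w" "last w' = last w"
    "\<forall>i. \<beta> i \<in> set w"
    "w' = pw (hd w) (\<beta> 1) (m 1) @ concat (map (\<lambda>i. pw (\<beta> i) (hd w) (m i)) [2..<card (set w)])"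
proof -
  define a h where "a = hd w" and "h = count_list w"
  have "w \<noteq> []" using assms(4) by auto
  obtain xs where xs: "distinct xs" "set xs = set w - {a}"
    using obtain_other_letters[OF \<open>w \<noteq> []\<close>] by (auto simp: a_def)
  obtain \<beta> where \<beta>: "\<forall>i. \<beta> i \<in> set w" "map \<beta> [1..<card (set w)] = xs"
    using obtain_indexed_other_letters[OF \<open>w \<noteq> []\<close> xs[unfolded a_def]] by blast
  have "card (set w) = Suc (length xs)"
    using card_set_eq_Suc_length[OF xs] \<open>w \<noteq> []\<close> by (simp add: a_def)
  then obtain x0 x1 rest where xs_eq: "xs = x0 # x1 # rest"
    using assms(4) by (cases xs rule: remdups_adj.cases) auto
  with \<beta>(2) assms(4) have "\<beta> 1 = x0" and \<beta>_rest: "map \<beta> [2..<card (set w)] = x1 # rest"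
    by (simp_all add: upt_conv_Cons numeral_2_eq_2 numeral_3_eq_3 del: upt_Suc)
  have "0 < h x0" "0 < h x1" "x0 \<noteq> a" "x0 \<noteq> x1"
    using xs xs_eq by (auto simp: h_def count_list_pos_iff)
  define v where "v = concat (map (\<lambda>x. pw x a (h x)) (x1 # rest))"
  have "x1 # rest \<noteq> []" "a \<notin> set (x1 # rest)" "\<forall>y\<in>set (x1 # rest). 0 < h y"
    using xs xs_eq by (auto simp: h_def count_list_pos_iff)
  note v = reduced_concat_pw_ending[OF this, folded v_def, simplified]
  have "v \<noteq> []" using \<open>0 < h x1\<close> by (simp add: v_def)
  then have "reduced (pw a x0 (h x0) @ v)"
    using reduced_pw[OF \<open>x0 \<noteq> a\<close>[symmetric], of "h x0"]
      last_pw[OF \<open>0 < h x0\<close>, of a x0] \<open>x0 \<noteq> x1\<close> v(1,2)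
    by (simp add: reduced_iff_successively successively_append_iff)
  moreover have "mset (pw a x0 (h x0) @ v) = mset w"
  proof (rule multiset_eqI)
    fix z
    have "count_list (pw a x0 (h x0) @ v) z = count_list (concat (map (\<lambda>x. pw a x (h x)) xs)) z"
      using count_list_concat_pw_swap[of a h "x1 # rest"] xs_eq by (simp add: v_def)
    then show "count (mset (pw a x0 (h x0) @ v)) z = count (mset w) z"
      using count_list_concat_pw_other_letters[OF xs] assms(2)
      by (cases "z = a") (simp_all add: count_mset h_def a_def)
  qed
  moreover have "concat (map (\<lambda>i. pw (\<beta> i) a (h (\<beta> i))) [2..<card (set w)]) = v"
    unfolding v_def \<beta>_rest[symmetric] by (simp add: comp_def)
  ultimately show thesis
    using that[where w'="pw a x0 (h x0) @ v" and \<beta>=\<beta> and m="h \<circ> \<beta>"] \<beta>(1) \<open>0 < h x0\<close> \<open>\<beta> 1 = x0\<close>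
      v(3) \<open>v \<noteq> []\<close> assms(3) by (simp add: a_def hd_pw)
qed

section \<open>Interleaving the two halves of a word\<close>

definition flat_pairs :: "('a \<times> 'a) list \<Rightarrow> 'a list" where
  "flat_pairs ps = concat (map (\<lambda>(x, y). [x, y]) ps)"

lemma flat_pairs_simps [simp]:
  "flat_pairs [] = []"
  "flat_pairs ((x, y) # ps) = x # y # flat_pairs ps"
  by (simp_all add: flat_pairs_def)

lemma hd_flat_pairs: "ps \<noteq> [] \<Longrightarrow> hd (flat_pairs ps) = fst (hd ps)"
  by (cases ps) auto

lemma last_flat_pairs: "ps \<noteq> [] \<Longrightarrow> last (flat_pairs ps) = snd (last ps)"
proof (induction ps)
  case (Cons p ps)
  then show ?case by (cases p; cases ps) auto
qed simp

lemma mset_flat_pairs: "mset (flat_pairs ps) = mset (map fst ps) + mset (map snd ps)"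
  by (induction ps) auto

lemma reduced_flat_pairs_iff:
  "reduced (flat_pairs ps) \<longleftrightarrow> (\<forall>(x, y)\<in>set ps. x \<noteq> y) \<and> successively (\<lambda>p q. snd p \<noteq> fst q) ps"
  unfolding reduced_iff_successively
proof (induction ps)
  case (Cons p ps)
  then show ?case
    by (cases p; cases ps) (auto simp: successively_Cons hd_flat_pairs)
qed simp

definition pw_blocks :: "(('a \<times> 'a) \<times> nat) list \<Rightarrow> 'a list" where
  "pw_blocks bl = concat (map (\<lambda>((x, y), m). pw x y m) bl)"

lemma pw_blocks_eq_flat_pairs: "pw_blocks bl = flat_pairs (concat (map (\<lambda>(p, m). replicate m p) bl))"
proof -
  have "pw x y m = flat_pairs (replicate m (x, y))" for x y :: 'a and m
    by (induction m) (auto simp: pw_Suc)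
  moreover have "flat_pairs (xs @ ys) = flat_pairs xs @ flat_pairs ys" for xs ys :: "('a \<times> 'a) list"
    by (simp add: flat_pairs_def)
  ultimately show ?thesis
    by (induction bl) (auto simp: pw_blocks_def)
qed

fun breaks :: "'a list \<Rightarrow> nat" where
  "breaks (x # y # zs) = of_bool (x \<noteq> y) + breaks (y # zs)"
| "breaks _ = 0"

lemma breaks_Cons: "breaks (x # xs) = (if xs = [] then 0 else of_bool (x \<noteq> hd xs) + breaks xs)"
  by (cases xs) auto

lemma breaks_append:
  "breaks (xs @ ys) = breaks xs + breaks ys + of_bool (xs \<noteq> [] \<and> ys \<noteq> [] \<and> last xs \<noteq> hd ys)"
  by (induction xs) (auto simp: breaks_Cons)

lemma breaks_replicate [simp]: "breaks (replicate m x) = 0"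
  by (induction m) (auto simp: breaks_Cons)

lemma breaks_zip: "length xs = length ys \<Longrightarrow> breaks (zip xs ys) \<le> breaks xs + breaks ys"
  by (induction xs ys rule: list_induct2) (auto simp: breaks_Cons hd_zip)

lemma run_length_encoding:
  assumes "xs \<noteq> []"
  obtains bl where "concat (map (\<lambda>(x, m). replicate m x) bl) = xs" "\<forall>b\<in>set bl. 0 < snd b"
    "length bl = Suc (breaks xs)"
  using assms
proof (induction xs arbitrary: thesis)
  case (Cons x xs)
  show ?case
  proof (cases xs)
    case Nil
    then show ?thesis using Cons.prems(1)[of "[(x, 1)]"] by auto
  next
    case (Cons y ys)
    then obtain bl where bl: "concat (map (\<lambda>(x, m). replicate m x) bl) = xs" "\<forall>b\<in>set bl. 0 < snd b"
      "length bl = Suc (breaks xs)"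
      using Cons.IH by blast
    then obtain m bl' where bl_eq: "bl = (y, m) # bl'" "0 < m"
      using Cons by (cases bl) (auto simp: gr0_conv_Suc)
    show ?thesis
    proof (cases "x = y")
      case True
      then show ?thesis
        using Cons.prems(1)[of "(y, Suc m) # bl'"] bl bl_eq \<open>xs = y # ys\<close> by auto
    next
      case False
      then show ?thesis
        using Cons.prems(1)[of "(x, 1) # bl"] bl \<open>xs = y # ys\<close> by auto
    qed
  qed
qed simp

(* The word S_0 S_N S_1 S_(N+1) ... S_(N-1) S_(2N-1),
   cut into the runs of its pairs (S_j, S_(N+j)). *)
lemma interleave_halves:
  assumes "length S = 2 * N" "0 < N"
    and separated: "\<forall>j<N. S ! j \<noteq> S ! (N + j)" "\<forall>j. Suc j < N \<longrightarrow> S ! (N + j) \<noteq> S ! Suc j"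
  obtains bl where "reduced (pw_blocks bl)" "mset (pw_blocks bl) = mset S"
    "hd (pw_blocks bl) = hd S" "last (pw_blocks bl) = last S" "\<forall>b\<in>set bl. 0 < snd b"
    "length bl + of_bool (S ! (N - 1) \<noteq> S ! N) \<le> Suc (breaks S)"
proof -
  define ps where "ps = zip (take N S) (drop N S)"
  have len: "length ps = N" and nth_ps: "\<And>j. j < N \<Longrightarrow> ps ! j = (S ! j, S ! (N + j))"
    using assms(1) by (simp_all add: ps_def)
  have "ps \<noteq> []" "S \<noteq> []" using len assms(1,2) by auto
  have "reduced (flat_pairs ps)"
    unfolding reduced_flat_pairs_iff successively_conv_nth
    using separated by (auto simp: in_set_conv_nth len nth_ps) (metis less_SucI)
  moreover have "mset (flat_pairs ps) = mset S"
    using assms(1) by (simp add: ps_def mset_flat_pairs flip: mset_append)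
  moreover have "hd (flat_pairs ps) = hd S"
    using hd_flat_pairs[OF \<open>ps \<noteq> []\<close>] hd_conv_nth[OF \<open>ps \<noteq> []\<close>] hd_conv_nth[OF \<open>S \<noteq> []\<close>]
      nth_ps[of 0] assms(2) by simp
  moreover have "last (flat_pairs ps) = last S"
    using last_flat_pairs[OF \<open>ps \<noteq> []\<close>] last_conv_nth[OF \<open>ps \<noteq> []\<close>] last_conv_nth[OF \<open>S \<noteq> []\<close>]
      nth_ps[of "N - 1"] len assms(1,2) by (simp add: mult_2)
  moreover obtain bl where bl: "concat (map (\<lambda>(p, m). replicate m p) bl) = ps"
    "\<forall>b\<in>set bl. 0 < snd b" "length bl = Suc (breaks ps)"
    using run_length_encoding[OF \<open>ps \<noteq> []\<close>] by blast
  moreover have "breaks ps + of_bool (S ! (N - 1) \<noteq> S ! N) \<le> breaks S"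
  proof -
    have "last (take N S) = S ! (N - 1)"
      using assms(1,2) by (subst last_conv_nth) (auto simp: min_def)
    moreover have "hd (drop N S) = S ! N"
      using assms(1,2) by (simp add: hd_drop_conv_nth)
    ultimately have "breaks S = breaks (take N S) + breaks (drop N S)
        + of_bool (S ! (N - 1) \<noteq> S ! N)"
      using breaks_append[of "take N S" "drop N S"] \<open>S \<noteq> []\<close> assms(1,2) by simp
    then show ?thesis
      using breaks_zip[of "take N S" "drop N S"] assms(1) by (simp add: ps_def)
  qed
  ultimately show thesis
    using that[of bl] by (simp add: pw_blocks_eq_flat_pairs)
qed

section \<open>Arrangements a^p M a^q\<close>

definition grouped :: "('a \<Rightarrow> nat) \<Rightarrow> 'a list \<Rightarrow> 'a list" where
  "grouped h xs = concat (map (\<lambda>x. replicate (h x) x) xs)"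

lemma grouped_simps [simp]:
  "grouped h [] = []"
  "grouped h (x # xs) = replicate (h x) x @ grouped h xs"
  by (simp_all add: grouped_def)

lemma grouped_eq_Nil_iff [simp]: "grouped h xs = [] \<longleftrightarrow> (\<forall>x\<in>set xs. h x = 0)"
  by (simp add: grouped_def)

lemma set_grouped: "set (grouped h xs) \<subseteq> set xs"
  by (induction xs) auto

lemma count_list_grouped: "distinct xs \<Longrightarrow>
  count_list (grouped h xs) z = (if z \<in> set xs then h z else 0)"
  by (induction xs) (auto simp: count_list_replicate)

lemma last_grouped: "xs \<noteq> [] \<Longrightarrow> 0 < h (last xs) \<Longrightarrow> last (grouped h xs) = last xs"
  by (simp add: grouped_def last_concat_map)

lemma breaks_grouped: "breaks (grouped h xs) \<le> length xs - 1"
proof (induction xs)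
  case (Cons x xs)
  then show ?case by (cases xs) (auto simp: breaks_append)
qed simp

lemma nth_grouped_eq:
  assumes "distinct xs" "i \<le> k" "k < length (grouped h xs)" "grouped h xs ! i = grouped h xs ! k"
  shows "k - i < count_list (grouped h xs) (grouped h xs ! i)"
  using assms
proof (induction xs arbitrary: i k)
  case (Cons x xs)
  let ?M = "grouped h xs"
  consider "k < h x" | "h x \<le> i" | "i < h x" "h x \<le> k" by linarith
  then show ?case
  proof cases
    case 1
    then show ?thesis using Cons.prems by (simp add: nth_append count_list_replicate)
  next
    case 2
    with Cons.prems Cons.IH[of "i - h x" "k - h x"]
    have "k - i < count_list ?M (?M ! (i - h x))" by (simp add: nth_append)
    with 2 show ?thesis by (auto simp: nth_append intro: trans_less_add2)
  next
    case 3
    then have "?M ! (k - h x) \<in> set ?M" using Cons.prems(3) by (intro nth_mem) simp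
    with 3 Cons.prems set_grouped[of h xs] show ?thesis by (auto simp: nth_append)
  qed
qed simp

lemma nth_split_arrangement_eq_iff:
  assumes "a \<notin> set xs" "i < p + length (grouped h xs) + q"
  shows "(replicate p a @ grouped h xs @ replicate q a) ! i = a
      \<longleftrightarrow> i < p \<or> p + length (grouped h xs) \<le> i"
proof -
  have "grouped h xs ! (i - p) \<noteq> a" if "p \<le> i" "i < p + length (grouped h xs)"
  proof -
    have "grouped h xs ! (i - p) \<in> set xs"
      using that set_grouped[of h xs] nth_mem[of "i - p" "grouped h xs"] by auto
    with assms(1) show ?thesis by auto
  qed
  with assms(2) show ?thesis by (auto simp: nth_append)
qed

lemma last_split_arrangement:
  assumes "q = 0" "xs \<noteq> []" "0 < h (last xs)"
  shows "last (replicate p a @ grouped h xs @ replicate q a) = last xs"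
proof -
  have "grouped h xs \<noteq> []"
    using assms(3) last_in_set[OF assms(2)] grouped_eq_Nil_iff[of h xs] by force
  then show ?thesis using last_grouped[of xs h] assms by simp
qed

lemma split_arrangement_nth_eq:
  assumes "S = replicate p a @ grouped h xs @ replicate q a" "distinct xs" "a \<notin> set xs"
    and "i \<le> k" "k < length S" "S ! i = S ! k" "S ! i \<noteq> a"
  shows "k - i < count_list (grouped h xs) (S ! i)" "S ! i \<in> set xs"
proof -
  let ?M = "grouped h xs"
  have "p \<le> i" "k < p + length ?M"
    using nth_split_arrangement_eq_iff[OF assms(3), of i p h q]
      nth_split_arrangement_eq_iff[OF assms(3), of k p h q]
      assms(1,4-7) by auto
  then have "S ! i = ?M ! (i - p)" "S ! k = ?M ! (k - p)"
    using assms(1,4) by (auto simp: nth_append)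
  then show "k - i < count_list ?M (S ! i)" "S ! i \<in> set xs"
    using nth_grouped_eq[OF assms(2), of "i - p" "k - p" h] \<open>p \<le> i\<close> \<open>k < p + length ?M\<close> assms(4,6)
      set_grouped[of h xs] nth_mem[of "i - p" ?M]
    by auto
qed

lemma split_arrangement_separated:
  assumes S: "S = replicate p a @ grouped h xs @ replicate q a"
    and "distinct xs" "a \<notin> set xs" "length S = 2 * N" "p + q \<le> N"
    and "\<forall>x\<in>set xs. h x \<le> N" "\<forall>x\<in>set xs. h x = N \<longrightarrow> q = 0 \<and> x = last xs"
  shows "\<forall>j<N. S ! j \<noteq> S ! (N + j)" "\<forall>j. Suc j < N \<longrightarrow> S ! (N + j) \<noteq> S ! Suc j"
proof -
  let ?M = "grouped h xs"
  have is_a: "S ! i = a \<longleftrightarrow> i < p \<or> p + length ?M \<le> i" if "i < 2 * N" for i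
    using nth_split_arrangement_eq_iff[OF assms(3)] that assms(4) by (simp add: S)
  note far = split_arrangement_nth_eq[OF S assms(2,3)]
  have count_M: "count_list ?M x = h x" if "x \<in> set xs" for x
    using count_list_grouped[OF assms(2)] that by simp
  have "length ?M + p + q = 2 * N" using assms(4) by (simp add: S)
  show "\<forall>j<N. S ! j \<noteq> S ! (N + j)"
  proof (intro allI impI notI)
    fix j assume "j < N" "S ! j = S ! (N + j)"
    then show False
      using is_a[of j] is_a[of "N + j"] far[of j "N + j"]
        count_M assms(4-6) \<open>length ?M + p + q = 2 * N\<close>
      by fastforce
  qed
  show "\<forall>j. Suc j < N \<longrightarrow> S ! (N + j) \<noteq> S ! Suc j"
  proof (intro allI impI notI)
    fix j assume j: "Suc j < N" and eq: "S ! (N + j) = S ! Suc j"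
    show False
    proof (cases "S ! Suc j = a")
      case True
      then show False
        using is_a[of "Suc j"] is_a[of "N + j"] eq j assms(5) \<open>length ?M + p + q = 2 * N\<close> by auto
    next
      case False
      define x where "x = S ! Suc j"
      have "x \<in> set xs" "N - 1 < h x"
        using far[of "Suc j" "N + j"] eq j False count_M assms(4) by (auto simp: x_def)
      then have "h x = N" "q = 0" "x = last xs"
        using assms(6,7) by force+
      moreover have "xs \<noteq> []" using \<open>x \<in> set xs\<close> by auto
      ultimately have "last S = x"
        using last_split_arrangement[of q xs h p a] j by (simp add: S)
      moreover have "S \<noteq> []" using assms(4) j by auto
      ultimately have "S ! (2 * N - 1) = x"
        using assms(4) by (simp add: last_conv_nth)
      then show False
        using far[of "Suc j" "2 * N - 1"] count_M[OF \<open>x \<in> set xs\<close>] \<open>h x = N\<close> False j assms(4)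
        by (simp add: x_def) linarith
    qed
  qed
qed

lemma breaks_split_arrangement:
  assumes "xs \<noteq> []"
  shows "breaks (replicate p a @ grouped h xs @ replicate q a) \<le> length xs + of_bool (0 < q)"
proof -
  have "Suc (breaks (grouped h xs)) \<le> length xs"
    using breaks_grouped[of h xs] assms by (cases xs) auto
  then show ?thesis
    by (auto simp: breaks_append of_bool_def)
qed

lemma mset_split_arrangement:
  assumes "distinct xs" "set xs = set v - {a}" "p + q = count_list v a"
  shows "mset (replicate p a @ grouped (count_list v) xs @ replicate q a) = mset v"
proof (rule multiset_eqI)
  fix z
  show "count (mset (replicate p a @ grouped (count_list v) xs @ replicate q a)) z
      = count (mset v) z"
  proof (cases "z = a")
    case True
    with assms(2,3) show ?thesis
      by (simp add: count_mset count_list_replicate count_list_grouped[OF assms(1)])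
  next
    case False
    with assms(2) show ?thesis
      by (simp add: count_mset count_list_replicate count_list_grouped[OF assms(1)] count_list_0_iff)
  qed
qed

lemma split_arrangement_blocks:
  assumes "h = count_list v" "S = replicate p a @ grouped h xs @ replicate q a"
    and "distinct xs" "set xs = set v - {a}" "xs \<noteq> []" "p + q = h a" "p + q \<le> N"
    and "length v = 2 * N" "0 < N"
    and "\<forall>x\<in>set xs. h x \<le> N" "\<forall>x\<in>set xs. h x = N \<longrightarrow> q = 0 \<and> x = last xs"
  obtains bl where "reduced (pw_blocks bl)" "mset (pw_blocks bl) = mset v"
    "hd (pw_blocks bl) = hd S" "last (pw_blocks bl) = last S" "\<forall>b\<in>set bl. 0 < snd b"
    "length bl + of_bool (S ! (N - 1) \<noteq> S ! N) \<le> Suc (length xs + of_bool (0 < q))"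
proof -
  have mset_S: "mset S = mset v"
    unfolding assms(1,2) using assms(3,4,6)[unfolded assms(1)] by (rule mset_split_arrangement)
  then have "length S = 2 * N"
    using assms(8) by (metis size_mset)
  have "a \<notin> set xs" using assms(4) by auto
  obtain bl where bl: "reduced (pw_blocks bl)" "mset (pw_blocks bl) = mset S"
    "hd (pw_blocks bl) = hd S" "last (pw_blocks bl) = last S" "\<forall>b\<in>set bl. 0 < snd b"
    "length bl + of_bool (S ! (N - 1) \<noteq> S ! N) \<le> Suc (breaks S)"
    using interleave_halves[OF \<open>length S = 2 * N\<close> assms(9)]
      split_arrangement_separated[OF assms(2,3) \<open>a \<notin> set xs\<close> \<open>length S = 2 * N\<close> assms(7,10,11)]
    by metis
  moreover have "breaks S \<le> length xs + of_bool (0 < q)"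
    unfolding assms(2) using assms(5) by (rule breaks_split_arrangement)
  ultimately show thesis
    using that[of bl] mset_S by simp
qed

section \<open>Rearranging a reduced word of even length into blocks\<close>

lemma rearrangement_distinct_ends:
  assumes "reduced v" "length v = 2 * N" "0 < N" "hd v \<noteq> last v" "card (set v) \<le> K"
  obtains bl where "reduced (pw_blocks bl)" "mset (pw_blocks bl) = mset v"
    "hd (pw_blocks bl) = hd v" "last (pw_blocks bl) = last v" "\<forall>b\<in>set bl. 0 < snd b"
    "length bl \<le> K"
proof -
  define a e h where "a = hd v" and "e = last v" and "h = count_list v"
  have "v \<noteq> []" using assms(2,3) by auto
  have bound: "2 * h x + 1 \<le> 2 * N + of_bool (a = x) + of_bool (e = x)" for x
    using reduced_count_bound[OF assms(1) \<open>v \<noteq> []\<close>, of x] assms(2) by (simp add: a_def e_def h_def)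
  obtain xs where xs: "distinct xs" "set xs = set v - {a}" "xs \<noteq> []" "last xs = e"
    using obtain_other_letters[OF \<open>v \<noteq> []\<close>] assms(4) by (auto simp: a_def e_def)
  define S where "S = replicate (h a) a @ grouped h xs @ replicate 0 a"
  have pq: "h a + 0 = h a" "h a + 0 \<le> N"
    using bound[of a] assms(4) by (simp_all add: a_def e_def)
  have "h x \<le> N \<and> (h x = N \<longrightarrow> 0 = 0 \<and> x = last xs)" if "x \<in> set xs" for x
    using bound[of x] that xs(2,4) by (auto simp: of_bool_def split: if_splits)
  then have caps: "\<forall>x\<in>set xs. h x \<le> N" "\<forall>x\<in>set xs. h x = N \<longrightarrow> 0 = 0 \<and> x = last xs"
    by blast+
  obtain bl where bl: "reduced (pw_blocks bl)" "mset (pw_blocks bl) = mset v"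
    "hd (pw_blocks bl) = hd S" "last (pw_blocks bl) = last S" "\<forall>b\<in>set bl. 0 < snd b"
    "length bl + of_bool (S ! (N - 1) \<noteq> S ! N) \<le> Suc (length xs + of_bool (0 < (0::nat)))"
    by (rule split_arrangement_blocks[OF h_def S_def xs(1,2,3) pq assms(2,3) caps])
  have "0 < h a" "0 < h e"
    using \<open>v \<noteq> []\<close> by (simp_all add: a_def e_def h_def count_list_pos_iff)
  moreover have "card (set v) = Suc (length xs)"
    using card_set_eq_Suc_length[OF xs(1,2)] \<open>v \<noteq> []\<close> by (simp add: a_def)
  moreover have "grouped h xs \<noteq> []" "last (grouped h xs) = e"
    using last_grouped[OF xs(3), of h] last_in_set[OF xs(3)] xs(4) \<open>0 < h e\<close> by auto
  ultimately show thesis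
    using that[of bl] bl assms(5) by (simp add: S_def a_def e_def)
qed

lemma equal_ends_count_bounds:
  assumes "reduced v" "length v = 2 * N" "0 < N" "hd v = last v"
  shows "2 \<le> count_list v (hd v)" "count_list v (hd v) \<le> N"
    and "\<And>x. x \<noteq> hd v \<Longrightarrow> count_list v x < N" "2 \<le> card (set v - {hd v})"
proof -
  define a h where "a = hd v" and "h = count_list v"
  have "v \<noteq> []" using assms(2,3) by auto
  have bound: "2 * h x + 1 \<le> 2 * N + 2 * of_bool (a = x)" for x
    using reduced_count_bound[OF assms(1) \<open>v \<noteq> []\<close>, of x] assms(2,4) by (simp add: a_def h_def)
  have "v = a # butlast (tl v) @ [a]"
    using hd_last_split[of v] assms(2,3,4) by (simp add: a_def)
  then have "h a = count_list (a # butlast (tl v) @ [a]) a"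
    unfolding h_def by (rule arg_cong)
  then have "2 \<le> h a" by simp
  then show "2 \<le> count_list v (hd v)" by (simp add: a_def h_def)
  have "h a \<le> N" using bound[of a] by simp
  then show "count_list v (hd v) \<le> N" by (simp add: a_def h_def)
  show less: "count_list v x < N" if "x \<noteq> hd v" for x
    using bound[of x] that by (simp add: a_def h_def)
  have "h a + sum h (set v - {a}) = 2 * N"
    using sum.remove[of "set v" a h] sum_count_set[of v "set v"] \<open>v \<noteq> []\<close> assms(2)
    by (simp add: a_def h_def)
  moreover have "sum h (set v - {a}) \<le> card (set v - {a}) * (N - 1)"
    using sum_bounded_above[of "set v - {a}" h "N - 1"] less by (force simp: a_def h_def)
  ultimately have "N \<le> card (set v - {a}) * (N - 1)"
    using \<open>h a \<le> N\<close> by linarith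
  show "2 \<le> card (set v - {hd v})"
  proof (rule ccontr)
    assume "\<not> 2 \<le> card (set v - {hd v})"
    then have "card (set v - {a}) * (N - 1) \<le> 1 * (N - 1)"
      unfolding a_def by (intro mult_le_mono1) linarith
    with \<open>N \<le> card (set v - {a}) * (N - 1)\<close> assms(3) show False by linarith
  qed
qed

lemma rearrangement_equal_ends:
  assumes "reduced v" "length v = 2 * N" "0 < N" "hd v = last v" "card (set v) + 1 \<le> K"
  obtains bl where "reduced (pw_blocks bl)" "mset (pw_blocks bl) = mset v"
    "hd (pw_blocks bl) = hd v" "last (pw_blocks bl) = last v" "\<forall>b\<in>set bl. 0 < snd b"
    "length bl \<le> K"
proof -
  define a h where "a = hd v" and "h = count_list v"
  note bounds = equal_ends_count_bounds[OF assms(1-4), folded a_def h_def]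
  have "v \<noteq> []" using assms(2,3) by auto
  obtain xs where xs: "distinct xs" "set xs = set v - {a}"
    using finite_distinct_list[of "set v - {a}"] by blast
  have "xs \<noteq> []" using bounds(4) xs(2) by (metis card.empty empty_set not_numeral_le_zero)
  define S where "S = replicate 1 a @ grouped h xs @ replicate (h a - 1) a"
  have pq: "1 + (h a - 1) = h a" "1 + (h a - 1) \<le> N"
    using bounds(1,2) by simp_all
  have caps: "\<forall>x\<in>set xs. h x \<le> N" "\<forall>x\<in>set xs. h x = N \<longrightarrow> h a - 1 = 0 \<and> x = last xs"
    using bounds(3) xs(2) by (auto intro: less_imp_le)
  obtain bl where bl: "reduced (pw_blocks bl)" "mset (pw_blocks bl) = mset v"
    "hd (pw_blocks bl) = hd S" "last (pw_blocks bl) = last S" "\<forall>b\<in>set bl. 0 < snd b"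
    "length bl + of_bool (S ! (N - 1) \<noteq> S ! N) \<le> Suc (length xs + of_bool (0 < h a - 1))"
    by (rule split_arrangement_blocks[OF h_def S_def xs(1,2) \<open>xs \<noteq> []\<close> pq assms(2,3) caps])
  moreover have "card (set v) = Suc (length xs)"
    using card_set_eq_Suc_length[OF xs(1,2)] \<open>v \<noteq> []\<close> by (simp add: a_def)
  ultimately show thesis
    using that[of bl] bounds(1) assms(4,5) by (simp add: S_def a_def)
qed

lemma rearrangement_equal_ends_three_letters:
  assumes "reduced v" "length v = 2 * N" "0 < N" "hd v = last v" "card (set v) = 3" "3 \<le> K"
  obtains bl where "reduced (pw_blocks bl)" "mset (pw_blocks bl) = mset v"
    "hd (pw_blocks bl) = hd v" "last (pw_blocks bl) = last v" "\<forall>b\<in>set bl. 0 < snd b"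
    "length bl \<le> K"
proof -
  define a h where "a = hd v" and "h = count_list v"
  note bounds = equal_ends_count_bounds[OF assms(1-4), folded a_def h_def]
  have "v \<noteq> []" using assms(2,3) by auto
  then have "card (set v - {a}) = 2" using assms(5) by (simp add: a_def)
  then obtain x1 x2 where x12: "set v - {a} = {x1, x2}" "x1 \<noteq> x2" "h x2 \<le> h x1"
    by (auto simp: card_2_iff) (metis insert_commute nle_le)
  define xs where "xs = [x1, x2]"
  have xs: "distinct xs" "set xs = set v - {a}" "xs \<noteq> []" using x12 by (auto simp: xs_def)
  have "h a + h x1 + h x2 = 2 * N"
    using count_list_add_sum_list_others[OF xs(1,2)] assms(2) by (simp add: xs_def h_def)
  moreover have "h x1 < N" "0 < h x2"
    using bounds(3)[of x1] x12(1) count_list_pos_iff[of v x2] by (auto simp: h_def)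
  ultimately have pq: "(N - h x1) + (h a - (N - h x1)) = h a"
    "(N - h x1) + (h a - (N - h x1)) \<le> N" and "0 < h a - (N - h x1)"
    using bounds(2) x12(3) by simp_all
  have caps: "\<forall>x\<in>set xs. h x \<le> N"
    "\<forall>x\<in>set xs. h x = N \<longrightarrow> h a - (N - h x1) = 0 \<and> x = last xs"
    using bounds(3) xs(2) by (auto intro: less_imp_le)
  (* Starting S with N - h x1 letters a makes S change letter exactly between its two halves,
     which saves the block that the final run of a's costs in general. *)
  define S where "S = replicate (N - h x1) a @ grouped h xs @ replicate (h a - (N - h x1)) a"
  obtain bl where bl: "reduced (pw_blocks bl)" "mset (pw_blocks bl) = mset v"
    "hd (pw_blocks bl) = hd S" "last (pw_blocks bl) = last S" "\<forall>b\<in>set bl. 0 < snd b"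
    "length bl + of_bool (S ! (N - 1) \<noteq> S ! N) \<le> Suc (length xs + of_bool (0 < h a - (N - h x1)))"
    by (rule split_arrangement_blocks[OF h_def S_def xs pq assms(2,3) caps])
  moreover have "S ! (N - 1) = x1" "S ! N = x2"
    using \<open>h x1 < N\<close> \<open>0 < h x2\<close> x12(3) by (auto simp: S_def xs_def nth_append)
  ultimately show thesis
    using that[of bl] \<open>0 < h a - (N - h x1)\<close> \<open>h x1 < N\<close> x12(2) assms(4,6)
    by (simp add: S_def xs_def a_def)
qed

lemma choose_two_lower_bounds:
  shows "3 \<le> l \<Longrightarrow> l \<le> l choose 2" and "4 \<le> l \<Longrightarrow> l + 1 \<le> l choose 2"
proof -
  assume "3 \<le> l"
  then have "l * 2 div 2 \<le> l * (l - 1) div 2"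
    by (intro div_le_mono mult_le_mono2) simp
  then show "l \<le> l choose 2" by (simp add: choose_two)
next
  assume "4 \<le> l"
  then have "l * 3 \<le> l * (l - 1)" by (intro mult_le_mono2) simp
  then have "(l * 2 + 2) div 2 \<le> l * (l - 1) div 2"
    using \<open>4 \<le> l\<close> by (intro div_le_mono) linarith
  then show "l + 1 \<le> l choose 2" by (simp add: choose_two)
qed

lemma reduced_even_rearrangement:
  assumes "reduced v" "length v = 2 * N" "0 < N" "card (set v) \<le> l" "3 \<le> l"
  obtains bl where "reduced (pw_blocks bl)" "mset (pw_blocks bl) = mset v"
    "hd (pw_blocks bl) = hd v" "last (pw_blocks bl) = last v" "\<forall>b\<in>set bl. 0 < snd b"
    "length bl \<le> l choose 2"
proof -
  have "v \<noteq> []" using assms(2,3) by auto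
  then have "3 \<le> card (set v)" if "hd v = last v"
    using equal_ends_count_bounds(4)[OF assms(1-3) that] by (simp add: card_Diff_singleton)
  then consider "hd v \<noteq> last v"
      | "hd v = last v" "card (set v) = 3" | "hd v = last v" "4 \<le> card (set v)"
    by fastforce
  then show thesis
  proof cases
    case 1
    moreover have "card (set v) \<le> l choose 2"
      using choose_two_lower_bounds(1)[OF assms(5)] assms(4) by linarith
    ultimately show thesis
      by (elim rearrangement_distinct_ends[OF assms(1-3)] that)
  next
    case 2
    moreover have "3 \<le> l choose 2"
      using choose_two_lower_bounds(1)[OF assms(5)] assms(5) by linarith
    ultimately show thesis
      by (elim rearrangement_equal_ends_three_letters[OF assms(1-3)] that)
  next
    case 3
    moreover have "card (set v) + 1 \<le> l choose 2"
      using choose_two_lower_bounds(2)[of l] assms(4) 3 by linarith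
    ultimately show thesis
      by (elim rearrangement_equal_ends[OF assms(1-3)] that)
  qed
qed

lemma obtain_pw_blocks_indexed:
  assumes "bl \<noteq> []" "\<forall>b\<in>set bl. 0 < snd b"
  obtains \<beta> \<gamma> m where "\<forall>i. \<beta> i \<in> set (pw_blocks bl) \<and> \<gamma> i \<in> set (pw_blocks bl)"
    "\<beta> 1 = hd (pw_blocks bl)"
    "pw_blocks bl = pw (\<beta> 1) (\<gamma> 1) (m 1)
      @ concat (map (\<lambda>i. pw (\<beta> i) (\<gamma> i) (m i)) [2..<Suc (length bl)])"
proof -
  define A :: "(('a \<times> 'a) \<times> nat) set"
    where "A = {b. fst (fst b) \<in> set (pw_blocks bl) \<and> snd (fst b) \<in> set (pw_blocks bl)}"
  have "set bl \<subseteq> A"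
  proof
    fix b assume "b \<in> set bl"
    moreover obtain x y m where "b = ((x, y), m)" by (metis prod.exhaust)
    ultimately have "set (pw x y m) \<subseteq> set (pw_blocks bl)" "0 < m"
      using assms(2) by (force simp: pw_blocks_def)+
    then show "b \<in> A" using \<open>b = ((x, y), m)\<close> by (cases m) (auto simp: A_def pw_Suc)
  qed
  moreover have "hd bl \<in> A" using calculation assms(1) by auto
  ultimately obtain B where B: "\<forall>i. B i \<in> A" "map B [1..<1 + length bl] = bl"
    using obtain_indexed_family[of "hd bl" A bl 1] by blast
  define \<beta> \<gamma> m where "\<beta> i = fst (fst (B i))" and "\<gamma> i = snd (fst (B i))" and "m i = snd (B i)" for i
  have "pw_blocks bl = concat (map (\<lambda>i. pw (\<beta> i) (\<gamma> i) (m i)) [1..<Suc (length bl)])"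
    by (subst B(2)[symmetric])
      (simp add: pw_blocks_def comp_def split_beta \<beta>_def \<gamma>_def m_def del: upt_Suc)
  moreover have "[1..<Suc (length bl)] = 1 # [2..<Suc (length bl)]"
    using assms(1) by (simp add: upt_conv_Cons numeral_2_eq_2 del: upt_Suc)
  ultimately have split:
      "pw_blocks bl = pw (\<beta> 1) (\<gamma> 1) (m 1)
        @ concat (map (\<lambda>i. pw (\<beta> i) (\<gamma> i) (m i)) [2..<Suc (length bl)])"
    by simp
  have "B 1 = hd bl"
    using arg_cong[OF B(2), of hd] assms(1) by (simp add: upt_conv_Cons del: upt_Suc)
  then have "0 < m 1"
    using assms by (simp add: m_def)
  then have "\<beta> 1 = hd (pw_blocks bl)"
    by (simp add: split hd_pw)
  moreover have "\<forall>i. \<beta> i \<in> set (pw_blocks bl) \<and> \<gamma> i \<in> set (pw_blocks bl)"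
    using B(1) by (simp add: A_def \<beta>_def \<gamma>_def)
  ultimately show thesis
    using that split by blast
qed

lemma obtain_even_prefix:
  assumes "w \<noteq> []"
  obtains v d where "w = v @ d" "length v = 2 * (length w div 2)" "d \<in> {[], [last w]}"
proof (cases "even (length w)")
  case True
  then show thesis by (intro that[of w "[]"]) auto
next
  case False
  then show thesis using assms by (intro that[of "butlast w" "[last w]"]) auto
qed

lemma rearrange_prefix:
  assumes "reduced (v @ d)" "reduced u" "mset u = mset v" "hd u = hd v" "last u = last v" "v \<noteq> []"
  shows "reduced (u @ d)" "mset (u @ d) = mset (v @ d)"
      "hd (u @ d) = hd (v @ d)" "last (u @ d) = last (v @ d)"
proof -
  have "u \<noteq> []" using assms(3,6) by auto
  then show "reduced (u @ d)"
    using assms(1,2,5,6) by (simp add: reduced_iff_successively successively_append_iff)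
  show "mset (u @ d) = mset (v @ d)" "hd (u @ d) = hd (v @ d)" "last (u @ d) = last (v @ d)"
    using assms(3-6) \<open>u \<noteq> []\<close> by (simp_all add: last_append)
qed

lemma rearrangement_blocks:
  assumes "reduced w" "3 \<le> card (set w)"
  obtains w' \<beta> \<gamma> m d k where "reduced w'" "mset w' = mset w" "hd w' = hd w" "last w' = last w"
    "\<forall>i. \<beta> i \<in> set w \<and> \<gamma> i \<in> set w" "d \<in> {[], [last w]}" "1 \<le> k" "k \<le> card (set w) choose 2"
    "w' = pw (hd w) (\<gamma> 1) (m 1) @ concat (map (\<lambda>i. pw (\<beta> i) (\<gamma> i) (m i)) [2..<Suc k]) @ d"
proof -
  have "3 \<le> length w" using assms(2) card_length[of w] by linarith
  then have "w \<noteq> []" by auto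
  then obtain v d where w_eq: "w = v @ d" and len_v: "length v = 2 * (length w div 2)"
    and d: "d \<in> {[], [last w]}"
    by (rule obtain_even_prefix)
  have "0 < length w div 2" using \<open>3 \<le> length w\<close> by simp
  have "reduced v" using assms(1) w_eq
    by (simp add: reduced_iff_successively successively_append_iff)
  moreover have "card (set v) \<le> card (set w)" using w_eq by (simp add: card_mono)
  ultimately obtain bl where bl: "reduced (pw_blocks bl)" "mset (pw_blocks bl) = mset v"
    "hd (pw_blocks bl) = hd v" "last (pw_blocks bl) = last v" "\<forall>b\<in>set bl. 0 < snd b"
    "length bl \<le> card (set w) choose 2"
    using reduced_even_rearrangement[OF _ len_v \<open>0 < length w div 2\<close> _ assms(2)] by blast
  have "v \<noteq> []" using len_v \<open>0 < length w div 2\<close> by auto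
  then have "bl \<noteq> []" using bl(2) by (auto simp: pw_blocks_def)
  have "hd v = hd w" using w_eq \<open>v \<noteq> []\<close> by simp
  obtain \<beta> \<gamma> m where letters: "\<forall>i. \<beta> i \<in> set v \<and> \<gamma> i \<in> set v"
    and form: "pw_blocks bl = pw (hd w) (\<gamma> 1) (m 1)
        @ concat (map (\<lambda>i. pw (\<beta> i) (\<gamma> i) (m i)) [2..<Suc (length bl)])"
    using obtain_pw_blocks_indexed[OF \<open>bl \<noteq> []\<close> bl(5)] bl(2,3) \<open>hd v = hd w\<close>
    by (metis mset_eq_setD)
  have "\<forall>i. \<beta> i \<in> set w \<and> \<gamma> i \<in> set w"
    using letters w_eq by auto
  moreover have "1 \<le> length bl" using \<open>bl \<noteq> []\<close> by (simp add: Suc_le_eq)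
  moreover have "pw_blocks bl @ d =
      pw (hd w) (\<gamma> 1) (m 1) @ concat (map (\<lambda>i. pw (\<beta> i) (\<gamma> i) (m i)) [2..<Suc (length bl)]) @ d"
    by (simp only: form append_assoc)
  ultimately show thesis
    using that rearrange_prefix[OF assms(1)[unfolded w_eq] bl(1-4) \<open>v \<noteq> []\<close>, folded w_eq] d bl(6)
    by blast
qed

lemma rearrangement_properties:
  assumes "mset w' = mset w" "hd w' = hd w" "last w' = last w" "2 \<le> length w" "set w \<subseteq> P"
  shows "set w' \<subseteq> P" "\<exists>u. w' = hd w # u @ [last w]" "\<forall>\<alpha>\<in>P. count_list w' \<alpha> = count_list w \<alpha>"
  using assms mset_eq_setD[OF assms(1)] hd_last_split[of w'] mset_eq_length[OF assms(1)]
  by (metis count_mset)+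

lemma first_letter_count_cases:
  fixes h n :: nat
  assumes "2 * h + 1 \<le> n + 1 + of_bool (c = a)"
  obtains "2 * h = n + of_bool (c = a)" | "2 * h = n" "c = a" | "2 * h < n"
  using assms by (cases "c = a") (auto simp: le_Suc_eq le_less less_Suc_eq)

theorem mainTheorem2:
  fixes P :: "'a set" and w :: "'a list"
  assumes "finite P" and "set w \<subseteq> P" and "reduced w" and "length w \<ge> 1"
  defines "a \<equiv> hd w" and "c \<equiv> last w" and "n \<equiv> length w" and "l \<equiv> card (set w)"
  shows "(l \<le> 2 \<longrightarrow>
            (w = pw a c (n div 2) \<or>
             (\<exists>b\<in>P. w = pw a b (n div 2) @ [a])))
       \<and> (l \<ge> 3 \<longrightarrow>
            (\<exists>w'. reduced w' \<and> set w' \<subseteq> P \<and> (\<exists>u. w' = a # u @ [c])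
               \<and> (\<forall>\<alpha>\<in>P. count_list w' \<alpha> = count_list w \<alpha>)
               \<and> ( (count_list w a = (n + 1) div 2 \<and>
                     (\<exists>(\<beta>::nat \<Rightarrow> 'a) (m::nat \<Rightarrow> nat) d. (\<forall>i. \<beta> i \<in> P) \<and> d \<in> {[], [a]} \<and>
                        w' = concat (map (\<lambda>i. pw a (\<beta> i) (m i)) [1..<l]) @ d))
                 \<or> (2 * count_list w a = n \<and>
                     (\<exists>(\<beta>::nat \<Rightarrow> 'a) (m::nat \<Rightarrow> nat). (\<forall>i. \<beta> i \<in> P) \<and>
                        w' = pw a (\<beta> 1) (m 1) @
                             concat (map (\<lambda>i. pw (\<beta> i) a (m i)) [2..<l])))
                 \<or> (2 * count_list w a < n \<and>
                     (\<exists>(\<beta>::nat \<Rightarrow> 'a) (\<gamma>::nat \<Rightarrow> 'a) (m::nat \<Rightarrow> nat) d k.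
                        (\<forall>i. \<beta> i \<in> P \<and> \<gamma> i \<in> P) \<and> d \<in> {[], [c]} \<and>
                        1 \<le> k \<and> k \<le> l choose 2 \<and>
                        w' = pw a (\<gamma> 1) (m 1) @
                             concat (map (\<lambda>i. pw (\<beta> i) (\<gamma> i) (m i)) [2..<Suc k]) @ d)))))"
proof -
  have "w \<noteq> []" using assms(4) by auto
  have props: "reduced w' \<and> set w' \<subseteq> P \<and> (\<exists>u. w' = a # u @ [c])
      \<and> (\<forall>\<alpha>\<in>P. count_list w' \<alpha> = count_list w \<alpha>)"
    if "reduced w'" "mset w' = mset w" "hd w' = a" "last w' = c" "3 \<le> l" for w'
    using rearrangement_properties[of w' w P] that assms(2) card_length[of w]
    by (simp add: a_def c_def l_def)
  have "2 * count_list w a + 1 \<le> n + 1 + of_bool (c = a)"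
    using reduced_count_bound[OF assms(3) \<open>w \<noteq> []\<close>, of a] by (simp add: a_def c_def n_def)
  then consider (small) "l \<le> 2"
    | (majority) "3 \<le> l" "2 * count_list w a = n + of_bool (c = a)"
    | (half) "3 \<le> l" "2 * count_list w a = n" "c = a"
    | (minority) "3 \<le> l" "2 * count_list w a < n"
    by (elim first_letter_count_cases) linarith+
  then show ?thesis
  proof cases
    case small
    then show ?thesis
      using reduced_card_le_2[OF assms(3) \<open>w \<noteq> []\<close>] assms(2) by (auto simp: a_def c_def n_def l_def)
  next
    case majority
    then obtain w' \<beta> m d where W: "reduced w'" "mset w' = mset w" "hd w' = a" "last w' = c"
      "\<forall>i. \<beta> i \<in> set w" "d \<in> {[], [a]}" "w' = concat (map (\<lambda>i. pw a (\<beta> i) (m i)) [1..<l]) @ d"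
      by (elim rearrangement_first_letter_majority[OF assms(3) \<open>w \<noteq> []\<close>,
            folded a_def c_def n_def l_def])
    have "\<exists>\<beta> m d. (\<forall>i. \<beta> i \<in> P) \<and> d \<in> {[], [a]} \<and>
        w' = concat (map (\<lambda>i. pw a (\<beta> i) (m i)) [1..<l]) @ d"
      using W(5-7) assms(2) by blast
    moreover have "count_list w a = (n + 1) div 2"
      using majority(2) by (cases "c = a") simp_all
    ultimately show ?thesis
      using props[OF W(1-4) majority(1)] majority(1)
      by (intro conjI impI) (simp_all add: exI[of _ w'])
  next
    case half
    then obtain w' \<beta> m where W: "reduced w'" "mset w' = mset w" "hd w' = a" "last w' = c"
      "\<forall>i. \<beta> i \<in> set w" "w' = pw a (\<beta> 1) (m 1) @ concat (map (\<lambda>i. pw (\<beta> i) a (m i)) [2..<l])"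
      by (elim rearrangement_first_letter_half[OF assms(3), folded a_def c_def n_def l_def])
    have "\<exists>\<beta> m. (\<forall>i. \<beta> i \<in> P) \<and>
        w' = pw a (\<beta> 1) (m 1) @ concat (map (\<lambda>i. pw (\<beta> i) a (m i)) [2..<l])"
      using W(5,6) assms(2) by blast
    then show ?thesis
      using props[OF W(1-4) half(1)] half by (intro conjI impI) (simp_all add: exI[of _ w'])
  next
    case minority
    then obtain w' \<beta> \<gamma> m d k where W: "reduced w'" "mset w' = mset w" "hd w' = a" "last w' = c"
      "\<forall>i. \<beta> i \<in> set w \<and> \<gamma> i \<in> set w" "d \<in> {[], [c]}" "1 \<le> k" "k \<le> l choose 2"
      "w' = pw a (\<gamma> 1) (m 1) @ concat (map (\<lambda>i. pw (\<beta> i) (\<gamma> i) (m i)) [2..<Suc k]) @ d"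
      by (elim rearrangement_blocks[OF assms(3), folded a_def c_def n_def l_def])
    have "\<exists>\<beta> \<gamma> m d k. (\<forall>i. \<beta> i \<in> P \<and> \<gamma> i \<in> P) \<and> d \<in> {[], [c]} \<and> 1 \<le> k \<and> k \<le> l choose 2 \<and>
        w' = pw a (\<gamma> 1) (m 1) @ concat (map (\<lambda>i. pw (\<beta> i) (\<gamma> i) (m i)) [2..<Suc k]) @ d"
      using W(5-9) assms(2) by blast
    then show ?thesis
      using props[OF W(1-4) minority(1)] minority by (intro conjI impI) (simp_all add: exI[of _ w'])
  qed
qed

end
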